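(* Let $P(\vec\alpha,\vec\beta,\vec\xi)\in\mathcal{P}$ be a syntactically compositional predicate and $P'(\vec\alpha,\vec\xi)\in\mathcal{P}$ a predicate which is a completion of $P$ with respect to a pair of constants $\vec c=(c_1,c_2)$. Then $P'(\vec\alpha,\vec\xi)\Leftrightarrow P(\vec\alpha,\vec c,\vec\xi)$ holds, and the entailment $\exists\vec\beta.\ P(\vec\alpha,\vec\beta,\vec\xi)\ast P'(\vec\beta,\vec\xi)\Rightarrow P'(\vec\alpha,\vec\xi)$ holds.
   Context: Separation logic setting: location variables (interpreted in a set $\mathbb{L}$ of locations, with a constant ${\sf nil}$) and data variables; pointer fields $\mathcal{F}$ and data fields $\mathcal{D}$. A state is $(s,h)$ with $s$ a stack assigning values to variables and $h$ a finite partial heap mapping (location, field) pairs to locations or data values. Formulas: pure parts (location (dis)equalities and data constraints in a decidable theory), spatial parts $\mathtt{emp}$, $E\mapsto\rho$, predicate atoms, $\ast$ (separating conjunction over domain-disjoint heaps), with $\land,\lor,\exists$. Predicates are defined by finite sets of rules $Q(E,\vec F)::=\exists\vec Z.\Pi\land\Sigma$ with least-fixed-point semantics; an entailment $A\Rightarrow B$ means every $(s,h)$ satisfying $A$ satisfies $B$; $\Leftrightarrow$ means entailment in both directions. Syntactic compositionality: $P$ has parameters $(\vec\alpha,\vec\beta,\vec\xi)$, $\vec\alpha=(E,C)$ (source), $\vec\beta=(F,H)$ (hole), $E,F$ location variables, $C,H$ data variables, $\vec\xi$ static parameters. $P$ is syntactically compositional if it has exactly one base rule $P(\vec\alpha,\vec\beta,\vec\xi)::=\alpha_1=\beta_1\land\alpha_2=\beta_2\land\mathtt{emp}$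 and at least one inductive rule, every inductive rule being of the form $P(\vec\alpha,\vec\beta,\vec\xi)::=\exists\vec Z.\ \Pi\land\Sigma_1\ast\Sigma_2\ast P(\vec\gamma,\vec\beta,\vec\xi)$ where $\Sigma_1$ is a nonempty separating conjunction of points-to atoms containing a unique points-to atom from $E$ and all location variables of $\vec Z$, whose Gaifman graph is a connected DAG rooted at $E$; $\Sigma_2$ is a possibly empty separating conjunction of predicate atoms whose first arguments are sink vertices of that graph; $\vec\gamma$ consists of variables of $\vec Z$; and the variables of $\vec\beta$ do not occur in $\Pi,\Sigma_1,\Sigma_2,\vec\gamma$. Completion: $P'$ with parameters $(\vec\alpha,\vec\xi)$ is a completion of $P$ with respect to $\vec c=(c_1,c_2)$ if its rules are obtained from those of $P$ by the substitution $\beta_1\mapsto c_1,\beta_2\mapsto c_2$: its only base rule is $P'(\vec\alpha,\vec\xi)::=\alpha_1=c_1\land\alpha_2=c_2\land\mathtt{emp}$, and for each inductive rule $P(\vec\alpha,\vec\beta,\vec\xi)::=\exists\vec Z.\ \Pi\land\Sigma_1\ast\Sigma_2\ast P(\vec\gamma,\vec\beta,\vec\xi)$ of $P$, $P'$ has the inductive rule $P'(\vec\alpha,\vec\xi)::=\exists\vec Z.\ \Pi\land\Sigma_1\ast\Sigma_2\ast P'(\vec\gamma,\vec\xi)$ (and these are all its rules). *)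

theory Defs
  imports Main "HOL-Library.Multiset"
begin

datatype 'n var = LV 'n | DV 'n

datatype ('l, 'd) val = Loc 'l | Dat 'd

datatype ('n, 'l, 'd) trm = V "'n var" | LC 'l | DC 'd

text \<open>Pure atoms: (dis)equalities and data constraints.  A data constraint is a
  constraint symbol 'c applied to terms; its meaning is given by a fixed
  interpretation dI of the (decidable) data theory.\<close>
datatype ('n, 'l, 'd, 'c) patom =
    PEq "('n, 'l, 'd) trm" "('n, 'l, 'd) trm"
  | PNeq "('n, 'l, 'd) trm" "('n, 'l, 'd) trm"
  | PData 'c "('n, 'l, 'd) trm list"

text \<open>Spatial atoms: points-to atoms E |-> rho (rho given by a list of pointer-field
  entries with fields 'pf and a list of data-field entries with fields 'df),
  and predicate atoms.\<close>
datatype ('n, 'l, 'd, 'pf, 'df, 'p) satom =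
    SPt "('n, 'l, 'd) trm" "('pf \<times> ('n, 'l, 'd) trm) list" "('df \<times> ('n, 'l, 'd) trm) list"
  | SPred 'p "('n, 'l, 'd) trm list"

datatype ('n, 'l, 'd, 'c, 'pf, 'df, 'p) form =
    FPure "('n, 'l, 'd, 'c) patom"
  | FEmp
  | FAtom "('n, 'l, 'd, 'pf, 'df, 'p) satom"
  | FSep "('n, 'l, 'd, 'c, 'pf, 'df, 'p) form" "('n, 'l, 'd, 'c, 'pf, 'df, 'p) form"
  | FAnd "('n, 'l, 'd, 'c, 'pf, 'df, 'p) form" "('n, 'l, 'd, 'c, 'pf, 'df, 'p) form"
  | FOr "('n, 'l, 'd, 'c, 'pf, 'df, 'p) form" "('n, 'l, 'd, 'c, 'pf, 'df, 'p) form"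
  | FEx "'n var" "('n, 'l, 'd, 'c, 'pf, 'df, 'p) form"

text \<open>An inductive rule  Q(params) ::= EX Z. Pi /\ Sigma  is stored as
  (Z, Pi, Sigma): Pi is a conjunction (list) of pure atoms and Sigma a separating
  conjunction (list) of spatial atoms (the empty list being emp).\<close>
type_synonym ('n, 'l, 'd, 'c, 'pf, 'df) rule =
  "'n var list \<times> ('n, 'l, 'd, 'c) patom list \<times> ('n, 'l, 'd, 'pf, 'df, 'n) satom list"

type_synonym ('n, 'l, 'd, 'c, 'pf, 'df, 'p) prule =
  "'n var list \<times> ('n, 'l, 'd, 'c) patom list \<times> ('n, 'l, 'd, 'pf, 'df, 'p) satom list"

type_synonym ('n, 'l, 'd, 'c, 'pf, 'df, 'p) sid =
  "'p \<Rightarrow> ('n var list \<times> ('n, 'l, 'd, 'c, 'pf, 'df, 'p) prule list)"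

type_synonym ('n, 'l, 'd) stack = "('n \<Rightarrow> 'l) \<times> ('n \<Rightarrow> 'd)"
type_synonym ('l, 'd, 'pf, 'df) heap = "('l \<times> 'pf \<rightharpoonup> 'l) \<times> ('l \<times> 'df \<rightharpoonup> 'd)"

fun evalv :: "('n, 'l, 'd) stack \<Rightarrow> 'n var \<Rightarrow> ('l, 'd) val" where
  "evalv s (LV x) = Loc (fst s x)"
| "evalv s (DV x) = Dat (snd s x)"

fun evalt :: "('n, 'l, 'd) stack \<Rightarrow> ('n, 'l, 'd) trm \<Rightarrow> ('l, 'd) val" where
  "evalt s (V x) = evalv s x"
| "evalt s (LC l) = Loc l"
| "evalt s (DC d) = Dat d"

definition hemp :: "('l, 'd, 'pf, 'df) heap" where
  "hemp = (Map.empty, Map.empty)"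

definition hdisj :: "('l, 'd, 'pf, 'df) heap \<Rightarrow> ('l, 'd, 'pf, 'df) heap \<Rightarrow> bool" where
  "hdisj h1 h2 \<longleftrightarrow> dom (fst h1) \<inter> dom (fst h2) = {} \<and> dom (snd h1) \<inter> dom (snd h2) = {}"

definition hunion :: "('l, 'd, 'pf, 'df) heap \<Rightarrow> ('l, 'd, 'pf, 'df) heap \<Rightarrow> ('l, 'd, 'pf, 'df) heap" where
  "hunion h1 h2 = (fst h1 ++ fst h2, snd h1 ++ snd h2)"

definition hfinite :: "('l, 'd, 'pf, 'df) heap \<Rightarrow> bool" where
  "hfinite h \<longleftrightarrow> finite (dom (fst h)) \<and> finite (dom (snd h))"

fun sat_pure :: "('c \<Rightarrow> 'd list \<Rightarrow> bool) \<Rightarrow> ('n, 'l, 'd) stack \<Rightarrow> ('n, 'l, 'd, 'c) patom \<Rightarrow> bool" where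
  "sat_pure dI s (PEq t1 t2) = (evalt s t1 = evalt s t2)"
| "sat_pure dI s (PNeq t1 t2) = (evalt s t1 \<noteq> evalt s t2)"
| "sat_pure dI s (PData c ts) = (\<exists>ds. map (evalt s) ts = map Dat ds \<and> dI c ds)"

definition sat_pt :: "('n, 'l, 'd) stack \<Rightarrow> ('l, 'd, 'pf, 'df) heap \<Rightarrow> ('n, 'l, 'd) trm
    \<Rightarrow> ('pf \<times> ('n, 'l, 'd) trm) list \<Rightarrow> ('df \<times> ('n, 'l, 'd) trm) list \<Rightarrow> bool" where
  "sat_pt s h E ps ds \<longleftrightarrow>
     (\<exists>l. evalt s E = Loc l
        \<and> dom (fst h) = {(l, f) | f. f \<in> fst ` set ps}
        \<and> dom (snd h) = {(l, f) | f. f \<in> fst ` set ds}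
        \<and> (\<forall>(f, t) \<in> set ps. \<exists>l'. evalt s t = Loc l' \<and> fst h (l, f) = Some l')
        \<and> (\<forall>(f, t) \<in> set ds. \<exists>d. evalt s t = Dat d \<and> snd h (l, f) = Some d))"

fun sat_satom :: "('p \<Rightarrow> ('l, 'd) val list \<Rightarrow> ('l, 'd, 'pf, 'df) heap \<Rightarrow> bool)
    \<Rightarrow> ('n, 'l, 'd) stack \<Rightarrow> ('l, 'd, 'pf, 'df) heap \<Rightarrow> ('n, 'l, 'd, 'pf, 'df, 'p) satom \<Rightarrow> bool" where
  "sat_satom I s h (SPt E ps ds) = sat_pt s h E ps ds"
| "sat_satom I s h (SPred p ts) = I p (map (evalt s) ts) h"

fun sat_sep :: "('p \<Rightarrow> ('l, 'd) val list \<Rightarrow> ('l, 'd, 'pf, 'df) heap \<Rightarrow> bool)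
    \<Rightarrow> ('n, 'l, 'd) stack \<Rightarrow> ('l, 'd, 'pf, 'df) heap \<Rightarrow> ('n, 'l, 'd, 'pf, 'df, 'p) satom list \<Rightarrow> bool" where
  "sat_sep I s h [] = (h = hemp)"
| "sat_sep I s h (a # as) =
     (\<exists>h1 h2. hdisj h1 h2 \<and> h = hunion h1 h2 \<and> sat_satom I s h1 a \<and> sat_sep I s h2 as)"

lemma sat_sep_mono: "I \<le> J \<Longrightarrow> sat_sep I s h xs \<longrightarrow> sat_sep J s h xs"
proof (induction xs arbitrary: h)
  case Nil then show ?case by simp
next
  case (Cons a xs)
  have "sat_satom I s h1 a \<Longrightarrow> sat_satom J s h1 a" for h1
  proof -
    assume H: "sat_satom I s h1 a"
    have IJ: "I p vs hp \<Longrightarrow> J p vs hp" for p vs hp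
      using Cons.prems le_funD[OF le_funD[OF le_funD[OF Cons.prems]]] by (simp add: le_bool_def)
    show "sat_satom J s h1 a" using H IJ by (cases a) simp_all
  qed
  then show ?case using Cons by fastforce
qed

text \<open>Least-fixed-point semantics of the predicates: P(vs) holds in h iff for some
  rule (Z, Pi, Sigma) of P and some stack s mapping the parameters to vs
  (the values of all other variables, in particular those of Z, being
  existentially chosen), s satisfies Pi and (s, h) satisfies Sigma.\<close>
inductive pred_sem :: "('c \<Rightarrow> 'd list \<Rightarrow> bool) \<Rightarrow> ('n, 'l, 'd, 'c, 'pf, 'df, 'p) sid
    \<Rightarrow> 'p \<Rightarrow> ('l, 'd) val list \<Rightarrow> ('l, 'd, 'pf, 'df) heap \<Rightarrow> bool"
  for dI \<Delta> where
  "\<Delta> p = (ps, rs) \<Longrightarrow> (Z, Pi, Sig) \<in> set rs \<Longrightarrow> map (evalv s) ps = vs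
   \<Longrightarrow> (\<forall>a \<in> set Pi. sat_pure dI s a) \<Longrightarrow> sat_sep (pred_sem dI \<Delta>) s h Sig
   \<Longrightarrow> pred_sem dI \<Delta> p vs h"
  monos sat_sep_mono

fun upd_var :: "('n, 'l, 'd) stack \<Rightarrow> 'n var \<Rightarrow> ('l, 'd) val \<Rightarrow> ('n, 'l, 'd) stack \<Rightarrow> bool" where
  "upd_var s (LV x) v s' = (\<exists>l. v = Loc l \<and> s' = ((fst s)(x := l), snd s))"
| "upd_var s (DV x) v s' = (\<exists>d. v = Dat d \<and> s' = (fst s, (snd s)(x := d)))"

fun sat :: "('c \<Rightarrow> 'd list \<Rightarrow> bool) \<Rightarrow> ('n, 'l, 'd, 'c, 'pf, 'df, 'p) sid
    \<Rightarrow> ('n, 'l, 'd) stack \<Rightarrow> ('l, 'd, 'pf, 'df) heap \<Rightarrow> ('n, 'l, 'd, 'c, 'pf, 'df, 'p) form \<Rightarrow> bool" where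
  "sat dI \<Delta> s h (FPure a) = sat_pure dI s a"
| "sat dI \<Delta> s h FEmp = (h = hemp)"
| "sat dI \<Delta> s h (FAtom a) = sat_satom (pred_sem dI \<Delta>) s h a"
| "sat dI \<Delta> s h (FSep A B) =
     (\<exists>h1 h2. hdisj h1 h2 \<and> h = hunion h1 h2 \<and> sat dI \<Delta> s h1 A \<and> sat dI \<Delta> s h2 B)"
| "sat dI \<Delta> s h (FAnd A B) = (sat dI \<Delta> s h A \<and> sat dI \<Delta> s h B)"
| "sat dI \<Delta> s h (FOr A B) = (sat dI \<Delta> s h A \<or> sat dI \<Delta> s h B)"
| "sat dI \<Delta> s h (FEx x A) = (\<exists>v s'. upd_var s x v s' \<and> sat dI \<Delta> s' h A)"

definition entails where
  "entails dI \<Delta> A B \<longleftrightarrow> (\<forall>s h. hfinite h \<longrightarrow> sat dI \<Delta> s h A \<longrightarrow> sat dI \<Delta> s h B)"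

definition equiv_sl where
  "equiv_sl dI \<Delta> A B \<longleftrightarrow> entails dI \<Delta> A B \<and> entails dI \<Delta> B A"

fun vars_trm :: "('n, 'l, 'd) trm \<Rightarrow> 'n var set" where
  "vars_trm (V x) = {x}"
| "vars_trm (LC l) = {}"
| "vars_trm (DC d) = {}"

fun vars_patom :: "('n, 'l, 'd, 'c) patom \<Rightarrow> 'n var set" where
  "vars_patom (PEq t1 t2) = vars_trm t1 \<union> vars_trm t2"
| "vars_patom (PNeq t1 t2) = vars_trm t1 \<union> vars_trm t2"
| "vars_patom (PData c ts) = \<Union> (vars_trm ` set ts)"

fun vars_satom :: "('n, 'l, 'd, 'pf, 'df, 'p) satom \<Rightarrow> 'n var set" where
  "vars_satom (SPt E ps ds) = vars_trm E \<union> \<Union> (vars_trm ` snd ` set ps) \<union> \<Union> (vars_trm ` snd ` set ds)"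
| "vars_satom (SPred p ts) = \<Union> (vars_trm ` set ts)"

definition gaif_vertices :: "('n, 'l, 'd, 'pf, 'df, 'p) satom list \<Rightarrow> 'n set" where
  "gaif_vertices Sig = {u. \<exists>a \<in> set Sig. LV u \<in> vars_satom a}"

definition gaif_edges :: "('n, 'l, 'd, 'pf, 'df, 'p) satom list \<Rightarrow> ('n \<times> 'n) set" where
  "gaif_edges Sig = {(u, v). \<exists>ps ds. SPt (V (LV u)) ps ds \<in> set Sig \<and> V (LV v) \<in> snd ` set ps}"

definition is_pt_from :: "'n \<Rightarrow> ('n, 'l, 'd, 'pf, 'df, 'p) satom \<Rightarrow> bool" where
  "is_pt_from u a \<longleftrightarrow> (\<exists>ps ds. a = SPt (V (LV u)) ps ds)"

definition gaif_sink :: "('n, 'l, 'd, 'pf, 'df, 'p) satom list \<Rightarrow> 'n \<Rightarrow> bool" where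
  "gaif_sink Sig v \<longleftrightarrow> v \<in> gaif_vertices Sig \<and> (\<nexists>w. (v, w) \<in> gaif_edges Sig)"

text \<open>An inductive rule of P with source (e, c), hole (f, hh) and static
  parameters xi, of the required shape
  EX Z. Pi /\ Sigma1 * Sigma2 * P(gamma, beta, xi)
  (the separating conjunction being taken up to reordering of its atoms).\<close>
definition comp_ind_rule ::
  "'p \<Rightarrow> 'n \<Rightarrow> 'n \<Rightarrow> 'n \<Rightarrow> 'n \<Rightarrow> 'n var list \<Rightarrow> ('n, 'l, 'd, 'c, 'pf, 'df, 'p) prule \<Rightarrow> bool" where
  "comp_ind_rule P e c f hh xi r \<longleftrightarrow>
    (\<exists>Z Pi Sig Sig1 Sig2 gam.
       r = (Z, Pi, Sig)
     \<and> mset Sig = mset (Sig1 @ Sig2 @ [SPred P (map V gam @ [V (LV f), V (DV hh)] @ map V xi)])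
     \<comment> \<open>Sigma1: nonempty separating conjunction of points-to atoms\<close>
     \<and> Sig1 \<noteq> [] \<and> (\<forall>a \<in> set Sig1. \<exists>u. is_pt_from u a)
     \<comment> \<open>with a unique points-to atom from E\<close>
     \<and> length (filter (is_pt_from e) Sig1) = 1
     \<comment> \<open>containing all location variables of Z\<close>
     \<and> (\<forall>z. LV z \<in> set Z \<longrightarrow> z \<in> gaif_vertices Sig1)
     \<comment> \<open>whose Gaifman graph is a connected DAG rooted at E\<close>
     \<and> acyclic (gaif_edges Sig1)
     \<and> (\<forall>v \<in> gaif_vertices Sig1. (e, v) \<in> (gaif_edges Sig1)\<^sup>*)
     \<comment> \<open>Sigma2: predicate atoms whose first arguments are sinks\<close>
     \<and> (\<forall>a \<in> set Sig2. \<exists>Q v ts. a = SPred Q (V (LV v) # ts) \<and> gaif_sink Sig1 v)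
     \<comment> \<open>gamma consists of variables of Z\<close>
     \<and> length gam = 2 \<and> set gam \<subseteq> set Z
     \<comment> \<open>beta does not occur in Pi, Sigma1, Sigma2, gamma\<close>
     \<and> (\<forall>x \<in> {LV f, DV hh}.
          x \<notin> \<Union> (vars_patom ` set Pi) \<and> x \<notin> \<Union> (vars_satom ` set Sig1)
        \<and> x \<notin> \<Union> (vars_satom ` set Sig2) \<and> x \<notin> set gam))"

text \<open>P is syntactically compositional: its parameters are (alpha, beta, xi) with
  alpha = (E, C), beta = (F, H), E, F location variables and C, H data
  variables (all parameters being distinct variables); it has exactly one base
  rule  alpha1 = beta1 /\ alpha2 = beta2 /\ emp,  at least one inductive rule, and
  all its other rules are inductive rules of the above shape.\<close>
definition base_rule :: "'n \<Rightarrow> 'n \<Rightarrow> 'n \<Rightarrow> 'n \<Rightarrow> ('n, 'l, 'd, 'c, 'pf, 'df, 'p) prule" where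
  "base_rule e c f hh = ([], [PEq (V (LV e)) (V (LV f)), PEq (V (DV c)) (V (DV hh))], [])"

definition synt_compositional :: "('n, 'l, 'd, 'c, 'pf, 'df, 'p) sid \<Rightarrow> 'p \<Rightarrow> bool" where
  "synt_compositional \<Delta> P \<longleftrightarrow>
    (\<exists>e c f hh xi rs.
       \<Delta> P = ([LV e, DV c, LV f, DV hh] @ xi, rs)
     \<and> distinct ([LV e, DV c, LV f, DV hh] @ xi)
     \<and> length (filter (\<lambda>r. r = base_rule e c f hh) rs) = 1
     \<and> (\<exists>r \<in> set rs. r \<noteq> base_rule e c f hh)
     \<and> (\<forall>r \<in> set rs. r \<noteq> base_rule e c f hh \<longrightarrow> comp_ind_rule P e c f hh xi r))"

definition subst_trm :: "'n \<Rightarrow> 'n \<Rightarrow> 'l \<Rightarrow> 'd \<Rightarrow> ('n, 'l, 'd) trm \<Rightarrow> ('n, 'l, 'd) trm" where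
  "subst_trm f hh c1 c2 t =
     (if t = V (LV f) then LC c1 else if t = V (DV hh) then DC c2 else t)"

fun subst_patom where
  "subst_patom f hh c1 c2 (PEq t1 t2) = PEq (subst_trm f hh c1 c2 t1) (subst_trm f hh c1 c2 t2)"
| "subst_patom f hh c1 c2 (PNeq t1 t2) = PNeq (subst_trm f hh c1 c2 t1) (subst_trm f hh c1 c2 t2)"
| "subst_patom f hh c1 c2 (PData d ts) = PData d (map (subst_trm f hh c1 c2) ts)"

fun subst_satom where
  "subst_satom f hh c1 c2 (SPt E ps ds) =
     SPt (subst_trm f hh c1 c2 E) (map (\<lambda>(g, t). (g, subst_trm f hh c1 c2 t)) ps)
         (map (\<lambda>(g, t). (g, subst_trm f hh c1 c2 t)) ds)"
| "subst_satom f hh c1 c2 (SPred Q ts) = SPred Q (map (subst_trm f hh c1 c2) ts)"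

text \<open>Renaming the recursive atoms P(gamma, beta, xi) into P'(gamma, xi).\<close>
fun ren_satom :: "'p \<Rightarrow> 'p \<Rightarrow> 'n \<Rightarrow> 'n \<Rightarrow> ('n, 'l, 'd, 'pf, 'df, 'p) satom \<Rightarrow> ('n, 'l, 'd, 'pf, 'df, 'p) satom" where
  "ren_satom P P' f hh (SPred Q ts) =
     (if Q = P \<and> length ts \<ge> 4 \<and> ts ! 2 = V (LV f) \<and> ts ! 3 = V (DV hh)
      then SPred P' (take 2 ts @ drop 4 ts) else SPred Q ts)"
| "ren_satom P P' f hh a = a"

definition compl_rule :: "'p \<Rightarrow> 'p \<Rightarrow> 'n \<Rightarrow> 'n \<Rightarrow> 'l \<Rightarrow> 'd
    \<Rightarrow> ('n, 'l, 'd, 'c, 'pf, 'df, 'p) prule \<Rightarrow> ('n, 'l, 'd, 'c, 'pf, 'df, 'p) prule" where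
  "compl_rule P P' f hh c1 c2 r =
     (case r of (Z, Pi, Sig) \<Rightarrow>
        (Z, map (subst_patom f hh c1 c2) Pi, map (subst_satom f hh c1 c2 \<circ> ren_satom P P' f hh) Sig))"

definition is_completion :: "('n, 'l, 'd, 'c, 'pf, 'df, 'p) sid \<Rightarrow> 'p \<Rightarrow> 'p \<Rightarrow> 'l \<Rightarrow> 'd \<Rightarrow> bool" where
  "is_completion \<Delta> P P' c1 c2 \<longleftrightarrow>
    (\<exists>e c f hh xi rs.
       \<Delta> P = ([LV e, DV c, LV f, DV hh] @ xi, rs)
     \<and> fst (\<Delta> P') = [LV e, DV c] @ xi
     \<and> set (snd (\<Delta> P')) = compl_rule P P' f hh c1 c2 ` set rs)"

end

theory Submission
  imports Defs
begin

text \<open>Unfolding a rule of the completion P' is the same as unfolding the corresponding rule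
  of P under a stack that sends the hole (F, H) to (c1, c2): the substitution of the constants
  for the hole is undone by updating the stack, and the renamed recursive atom P'(gamma, xi)
  stands for P(gamma, c1, c2, xi).  Rule induction in both directions gives
  P'(alpha, xi) <=> P(alpha, c, xi).

  For the composition, induct on the derivation of P(alpha, beta).  The base rule forces
  alpha = beta on the empty heap.  In an inductive rule the hole variables occur only in the
  recursive atom P(gamma, beta); by induction it absorbs the heap of P'(beta, xi) and becomes
  P'(gamma, xi), and what is left is an unfolding of the corresponding rule of P'.\<close>

lemma hemp_hunion [simp]: "hunion hemp h = h" "hunion h hemp = h"
  by (auto simp: hunion_def hemp_def)

lemma hdisj_hemp [simp]: "hdisj hemp h" "hdisj h hemp"
  by (auto simp: hdisj_def hemp_def)

lemma hdisj_sym: "hdisj h1 h2 \<longleftrightarrow> hdisj h2 h1"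
  by (auto simp: hdisj_def)

lemma hunion_comm: "hdisj h1 h2 \<Longrightarrow> hunion h1 h2 = hunion h2 h1"
  by (auto simp: hdisj_def hunion_def intro: map_add_comm)

lemma hunion_assoc: "hunion (hunion h1 h2) h3 = hunion h1 (hunion h2 h3)"
  by (simp add: hunion_def)

lemma hdisj_hunion_left: "hdisj (hunion h1 h2) h3 \<longleftrightarrow> hdisj h1 h3 \<and> hdisj h2 h3"
  by (auto simp: hdisj_def hunion_def)

lemma hdisj_hunion_right: "hdisj h1 (hunion h2 h3) \<longleftrightarrow> hdisj h1 h2 \<and> hdisj h1 h3"
  by (auto simp: hdisj_def hunion_def)

definition sep_conj ::
    "(('l, 'd, 'pf, 'df) heap \<Rightarrow> bool) \<Rightarrow> (('l, 'd, 'pf, 'df) heap \<Rightarrow> bool)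
      \<Rightarrow> ('l, 'd, 'pf, 'df) heap \<Rightarrow> bool"
  where "sep_conj A B h \<longleftrightarrow> (\<exists>h1 h2. hdisj h1 h2 \<and> h = hunion h1 h2 \<and> A h1 \<and> B h2)"

lemma sep_conj_emp: "sep_conj (\<lambda>h. h = hemp) A h \<longleftrightarrow> A h"
  unfolding sep_conj_def by (metis hdisj_hemp(1) hemp_hunion(1))

lemma sep_conj_commute: "sep_conj A B h \<longleftrightarrow> sep_conj B A h"
  unfolding sep_conj_def by (metis hdisj_sym hunion_comm)

lemma sep_conj_assoc: "sep_conj (sep_conj A B) C h \<longleftrightarrow> sep_conj A (sep_conj B C) h"
proof
  assume "sep_conj (sep_conj A B) C h"
  then obtain h1 h2 h3 where "hdisj h1 h2" "hdisj (hunion h1 h2) h3" "h = hunion (hunion h1 h2) h3"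
      "A h1" "B h2" "C h3"
    unfolding sep_conj_def by blast
  then show "sep_conj A (sep_conj B C) h"
    unfolding sep_conj_def hdisj_hunion_left hunion_assoc by (metis hdisj_hunion_right)
next
  assume "sep_conj A (sep_conj B C) h"
  then obtain h1 h2 h3 where "hdisj h2 h3" "hdisj h1 (hunion h2 h3)" "h = hunion h1 (hunion h2 h3)"
      "A h1" "B h2" "C h3"
    unfolding sep_conj_def by blast
  then show "sep_conj (sep_conj A B) C h"
    unfolding sep_conj_def hdisj_hunion_right hunion_assoc[symmetric] by (metis hdisj_hunion_left)
qed

lemma sep_conj_mono:
  assumes "sep_conj A B h" and "\<And>h. A h \<Longrightarrow> A' h" and "\<And>h. B h \<Longrightarrow> B' h"
  shows "sep_conj A' B' h"
  using assms unfolding sep_conj_def by blast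

lemma sat_sep_Cons:
  "sat_sep I s h (a # xs) \<longleftrightarrow> sep_conj (\<lambda>h. sat_satom I s h a) (\<lambda>h. sat_sep I s h xs) h"
  by (simp only: sat_sep.simps sep_conj_def)

lemma sat_sep_append:
  "sat_sep I s h (xs @ ys) \<longleftrightarrow> sep_conj (\<lambda>h. sat_sep I s h xs) (\<lambda>h. sat_sep I s h ys) h"
proof (induction xs arbitrary: h)
  case Nil
  then show ?case
    by (simp only: append_Nil sat_sep.simps(1) sep_conj_emp)
next
  case (Cons a xs)
  show ?case
    by (simp only: append_Cons sat_sep_Cons Cons.IH sep_conj_assoc)
qed

lemma sat_sep_single: "sat_sep I s h [a] \<longleftrightarrow> sat_satom I s h a"
  by (simp only: sat_sep_Cons sat_sep.simps(1) sep_conj_commute[of _ "\<lambda>h. h = hemp"] sep_conj_emp)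

lemma sat_sep_append_commute: "sat_sep I s h (xs @ ys) \<longleftrightarrow> sat_sep I s h (ys @ xs)"
  by (simp only: sat_sep_append sep_conj_commute)

lemma sat_sep_perm:
  assumes "mset xs = mset ys" and "sat_sep I s h xs"
  shows "sat_sep I s h ys"
  using assms
proof (induction xs arbitrary: ys h)
  case Nil
  then show ?case by simp
next
  case (Cons a xs)
  obtain ys1 ys2 where ys: "ys = ys1 @ a # ys2"
    by (metis Cons.prems(1) list.set_intros(1) set_mset_mset split_list)
  have "mset xs = mset (ys2 @ ys1)"
    using Cons.prems(1) ys by (simp add: union_commute)
  then have "sat_sep I s h (a # ys2 @ ys1)"
    using Cons.prems(2) Cons.IH unfolding sat_sep_Cons by (blast intro: sep_conj_mono)
  then show ?case
    using sat_sep_append_commute[of I s h "a # ys2" ys1] ys by simp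
qed

lemma sat_satom_mono:
  assumes "\<And>p vs h. J p vs h \<Longrightarrow> I p vs h" and "sat_satom J s h a"
  shows "sat_satom I s h a"
  using assms by (cases a) auto

lemma sat_sep_weaken:
  assumes "sat_sep J s h xs" and "\<And>p vs h. J p vs h \<Longrightarrow> I p vs h"
  shows "sat_sep I s h xs"
  using sat_sep_mono[of J I s h xs] assms by (auto simp: le_fun_def)

lemma sat_sep_list_all2:
  assumes "list_all2 (\<lambda>a b. \<forall>h. sat_satom I s h a \<longrightarrow> sat_satom J s' h b) xs ys"
    and "sat_sep I s h xs"
  shows "sat_sep J s' h ys"
  using assms by (induction xs ys arbitrary: h rule: list_all2_induct) fastforce+

definition stack_upd :: "'n \<Rightarrow> 'n \<Rightarrow> 'l \<Rightarrow> 'd \<Rightarrow> ('n, 'l, 'd) stack \<Rightarrow> ('n, 'l, 'd) stack" where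
  "stack_upd f hh l d s = ((fst s)(f := l), (snd s)(hh := d))"

lemma stack_upd_triv: "fst s f = l \<Longrightarrow> snd s hh = d \<Longrightarrow> stack_upd f hh l d s = s"
  by (auto simp: stack_upd_def)

lemma stack_upd_hole [simp]: "fst (stack_upd f hh l d s) f = l" "snd (stack_upd f hh l d s) hh = d"
  by (simp_all add: stack_upd_def)

lemma map_evalv_stack_upd:
  assumes "LV f \<notin> set xs" and "DV hh \<notin> set xs"
  shows "map (evalv (stack_upd f hh l d s)) xs = map (evalv s) xs"
proof (rule map_cong)
  fix x assume "x \<in> set xs"
  then have "x \<noteq> LV f" "x \<noteq> DV hh"
    using assms by auto
  then show "evalv (stack_upd f hh l d s) x = evalv s x"
    by (cases x) (auto simp: stack_upd_def)
qed simp

lemma evalt_subst_trm: "evalt s (subst_trm f hh l d t) = evalt (stack_upd f hh l d s) t"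
proof (cases t)
  case (V x)
  then show ?thesis by (cases x) (auto simp: subst_trm_def stack_upd_def)
qed (auto simp: subst_trm_def)

lemma sat_pure_subst_patom:
  "sat_pure dI s (subst_patom f hh l d a) = sat_pure dI (stack_upd f hh l d s) a"
  by (cases a) (simp_all add: evalt_subst_trm comp_def)

lemma image_fst_map_snd: "fst ` set (map (\<lambda>(g, t). (g, F t)) xs) = fst ` set xs"
  by force

lemma ball_map_snd:
  "(\<forall>(g, t) \<in> set (map (\<lambda>(g, t). (g, F t)) xs). Q g t) \<longleftrightarrow> (\<forall>(g, t) \<in> set xs. Q g (F t))"
  by auto

lemma sat_pt_subst_trm:
  "sat_pt s h (subst_trm f hh l d E) (map (\<lambda>(g, t). (g, subst_trm f hh l d t)) ps)
     (map (\<lambda>(g, t). (g, subst_trm f hh l d t)) ds) = sat_pt (stack_upd f hh l d s) h E ps ds"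
  unfolding sat_pt_def image_fst_map_snd ball_map_snd by (simp add: evalt_subst_trm)

lemma sat_satom_subst_satom:
  "sat_satom I s h (subst_satom f hh l d a) = sat_satom I (stack_upd f hh l d s) h a"
  by (cases a) (simp_all add: sat_pt_subst_trm evalt_subst_trm comp_def)

lemma subst_trm_id: "LV f \<notin> vars_trm t \<Longrightarrow> DV hh \<notin> vars_trm t \<Longrightarrow> subst_trm f hh l d t = t"
  by (cases t) (auto simp: subst_trm_def)

lemma subst_patom_id:
  "LV f \<notin> vars_patom a \<Longrightarrow> DV hh \<notin> vars_patom a \<Longrightarrow> subst_patom f hh l d a = a"
  by (cases a) (auto simp: subst_trm_id intro!: map_idI)

lemma subst_satom_id:
  "LV f \<notin> vars_satom a \<Longrightarrow> DV hh \<notin> vars_satom a \<Longrightarrow> subst_satom f hh l d a = a"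
  by (cases a) (force simp: subst_trm_id intro!: map_idI)+

lemma ren_satom_id: "LV f \<notin> vars_satom a \<Longrightarrow> ren_satom P P' f hh a = a"
proof (cases a)
  case (SPred Q ts)
  assume "LV f \<notin> vars_satom a"
  then have "V (LV f) \<notin> set ts"
    using SPred by force
  moreover have "length ts \<ge> 4 \<Longrightarrow> ts ! 2 \<in> set ts"
    by (rule nth_mem) simp
  ultimately have "\<not> (length ts \<ge> 4 \<and> ts ! 2 = V (LV f))"
    by metis
  then show ?thesis
    using SPred by auto
qed auto

lemma ren_satom_cases:
  obtains "ren_satom P P' f hh a = a"
  | t0 t1 ts where "a = SPred P (t0 # t1 # V (LV f) # V (DV hh) # ts)"
      and "ren_satom P P' f hh a = SPred P' (t0 # t1 # ts)"
proof (cases a)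
  case (SPred Q us)
  show ?thesis
  proof (cases "Q = P \<and> length us \<ge> 4 \<and> us ! 2 = V (LV f) \<and> us ! 3 = V (DV hh)")
    case True
    then obtain t0 t1 ts where "us = t0 # t1 # V (LV f) # V (DV hh) # ts"
      by (auto simp: Suc_le_length_iff numeral_eq_Suc)
    then show ?thesis
      using that(2) SPred True by simp
  next
    case False
    show ?thesis
      using that(1) unfolding SPred ren_satom.simps if_not_P[OF False] by simp
  qed
qed (use that in auto)

lemma sat_satom_ren_satomD:
  assumes "\<And>p vs h. J p vs h \<Longrightarrow> I p vs h"
    and "\<And>a b vs h. J P' (a # b # vs) h \<Longrightarrow> I P (a # b # Loc (fst s f) # Dat (snd s hh) # vs) h"
    and "sat_satom J s h (ren_satom P P' f hh x)"
  shows "sat_satom I s h x"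
  using ren_satom_cases[of P P' f hh x]
proof cases
  case 1
  then show ?thesis
    using sat_satom_mono[of J I, OF assms(1)] assms(3) by simp
next
  case (2 t0 t1 ts)
  then show ?thesis
    using assms(2,3) by simp
qed

lemma sat_satom_ren_satomI:
  assumes "\<And>p vs h. J p vs h \<Longrightarrow> I p vs h"
    and "\<And>a b vs h. J P (a # b # Loc (fst s f) # Dat (snd s hh) # vs) h \<Longrightarrow> I P' (a # b # vs) h"
    and "sat_satom J s h x"
  shows "sat_satom I s h (ren_satom P P' f hh x)"
  using ren_satom_cases[of P P' f hh x]
proof cases
  case 1
  then show ?thesis
    using sat_satom_mono[of J I, OF assms(1)] assms(3) by simp
next
  case (2 t0 t1 ts)
  then show ?thesis
    using assms(2,3) by simp
qed

lemma sat_sep_subst_satom: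
  "sat_sep I s h (map (subst_satom f hh l d) xs) \<longleftrightarrow> sat_sep I (stack_upd f hh l d s) h xs"
  by (induction xs arbitrary: h) (simp_all add: sat_satom_subst_satom)

lemma sat_sep_ren_satomD:
  assumes "\<And>p vs h. J p vs h \<Longrightarrow> I p vs h"
    and "\<And>a b vs h. J P' (a # b # vs) h \<Longrightarrow> I P (a # b # Loc (fst s f) # Dat (snd s hh) # vs) h"
    and "sat_sep J s h (map (ren_satom P P' f hh) xs)"
  shows "sat_sep I s h xs"
  using assms(3) by (rule sat_sep_list_all2[rotated])
    (auto simp: list_all2_map1 list_all2_same
      intro: sat_satom_ren_satomD[where J = J and I = I, OF assms(1,2)])

lemma sat_sep_ren_satomI:
  assumes "\<And>p vs h. J p vs h \<Longrightarrow> I p vs h"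
    and "\<And>a b vs h. J P (a # b # Loc (fst s f) # Dat (snd s hh) # vs) h \<Longrightarrow> I P' (a # b # vs) h"
    and "sat_sep J s h xs"
  shows "sat_sep I s h (map (ren_satom P P' f hh) xs)"
  using assms(3) by (rule sat_sep_list_all2[rotated])
    (auto simp: list_all2_map2 list_all2_same
      intro: sat_satom_ren_satomI[where J = J and I = I, OF assms(1,2)])

lemma sat_FEx_LV_FEx_DV:
  "sat dI \<Delta> s h (FEx (LV f) (FEx (DV hh) A)) \<longleftrightarrow> (\<exists>l d. sat dI \<Delta> (stack_upd f hh l d s) h A)"
  by (fastforce simp: stack_upd_def)

lemma compl_rule_Pair:
  "compl_rule P P' f hh l d (Z, Pi, Sig)
     = (Z, map (subst_patom f hh l d) Pi,
          map (subst_satom f hh l d) (map (ren_satom P P' f hh) Sig))"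
  by (simp add: compl_rule_def)

lemma comp_ind_rule_completion:
  assumes rule: "comp_ind_rule P e c f hh xi (Z, Pi, Sig)"
    and hole_not_static: "LV f \<notin> set xi" "DV hh \<notin> set xi"
  obtains Sig0 g1 g2 where
    "mset Sig = mset (Sig0 @ [SPred P ([V g1, V g2, V (LV f), V (DV hh)] @ map V xi)])"
    "mset (map (subst_satom f hh l d) (map (ren_satom P P' f hh) Sig))
       = mset (Sig0 @ [SPred P' ([V g1, V g2] @ map V xi)])"
    "map (subst_patom f hh l d) Pi = Pi"
proof -
  from rule obtain Sig1 Sig2 gam where
    Sig: "mset Sig = mset (Sig1 @ Sig2 @ [SPred P (map V gam @ [V (LV f), V (DV hh)] @ map V xi)])"
    and gam: "length gam = 2"
    and fresh: "\<forall>x \<in> {LV f, DV hh}. x \<notin> \<Union> (vars_patom ` set Pi)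
      \<and> x \<notin> \<Union> (vars_satom ` set Sig1) \<and> x \<notin> \<Union> (vars_satom ` set Sig2) \<and> x \<notin> set gam"
    unfolding comp_ind_rule_def by (elim exE conjE) (simp only: prod.inject)
  from gam obtain g1 g2 where g: "gam = [g1, g2]"
    by (auto simp: numeral_eq_Suc length_Suc_conv)
  let ?rec = "SPred P ([V g1, V g2, V (LV f), V (DV hh)] @ map V xi)"
  let ?compl = "subst_satom f hh l d \<circ> ren_satom P P' f hh"
  have "?compl a = a" if "a \<in> set (Sig1 @ Sig2)" for a
    using fresh that by (auto simp: ren_satom_id subst_satom_id)
  moreover have "?compl ?rec = SPred P' ([V g1, V g2] @ map V xi)"
    using fresh hole_not_static g by (auto simp: subst_trm_def intro!: map_idI)
  ultimately have compl_Sig: "map ?compl (Sig1 @ Sig2 @ [?rec])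
      = (Sig1 @ Sig2) @ [SPred P' ([V g1, V g2] @ map V xi)]"
    by (simp add: map_idI)
  have Sig_rec: "mset Sig = mset ((Sig1 @ Sig2) @ [?rec])"
    using Sig g by simp
  have "mset (map (subst_satom f hh l d) (map (ren_satom P P' f hh) Sig))
      = image_mset ?compl (mset Sig)"
    by simp
  also have "\<dots> = mset ((Sig1 @ Sig2) @ [SPred P' ([V g1, V g2] @ map V xi)])"
    unfolding Sig_rec mset_map[symmetric] using compl_Sig by simp
  finally show thesis
  proof (rule that[OF Sig_rec])
    show "map (subst_patom f hh l d) Pi = Pi"
      using fresh by (auto simp: subst_patom_id intro!: map_idI)
  qed
qed

locale completion =
  fixes \<Delta> :: "('n, 'l, 'd, 'c, 'pf, 'df, 'p) sid"
    and P P' :: 'p and e c f hh :: 'n and xi :: "'n var list"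
    and rs :: "('n, 'l, 'd, 'c, 'pf, 'df, 'p) prule list" and c1 :: 'l and c2 :: 'd
  assumes P_def: "\<Delta> P = ([LV e, DV c, LV f, DV hh] @ xi, rs)"
    and params_distinct: "distinct ([LV e, DV c, LV f, DV hh] @ xi)"
    and P'_params: "fst (\<Delta> P') = [LV e, DV c] @ xi"
    and P'_rules: "set (snd (\<Delta> P')) = compl_rule P P' f hh c1 c2 ` set rs"
begin

lemma map_evalv_params_stack_upd:
  "map (evalv (stack_upd f hh l d s)) ([LV e, DV c, LV f, DV hh] @ xi)
     = Loc (fst s e) # Dat (snd s c) # Loc l # Dat d # map (evalv s) xi"
  using params_distinct by (auto simp: map_evalv_stack_upd) (auto simp: stack_upd_def)

lemma pred_sem_P_intro:
  assumes "(Z, Pi, Sig) \<in> set rs" and "map (evalv s) ([LV e, DV c, LV f, DV hh] @ xi) = vs"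
    and "\<forall>a \<in> set Pi. sat_pure dI s a" and "sat_sep (pred_sem dI \<Delta>) s h Sig"
  shows "pred_sem dI \<Delta> P vs h"
  by (rule pred_sem.intros[where \<Delta> = \<Delta> and p = P, OF P_def assms])

lemma pred_sem_P'_intro:
  assumes "r \<in> set rs" and "compl_rule P P' f hh c1 c2 r = (Z, Pi, Sig)"
    and "map (evalv s) ([LV e, DV c] @ xi) = vs"
    and "\<forall>a \<in> set Pi. sat_pure dI s a" and "sat_sep (pred_sem dI \<Delta>) s h Sig"
  shows "pred_sem dI \<Delta> P' vs h"
proof (rule pred_sem.intros[where \<Delta> = \<Delta> and p = P'])
  show "\<Delta> P' = ([LV e, DV c] @ xi, snd (\<Delta> P'))"
    using P'_params by (metis prod.collapse)
  show "(Z, Pi, Sig) \<in> set (snd (\<Delta> P'))"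
    using assms(1,2) P'_rules by (metis image_eqI)
qed (use assms in auto)

lemma pred_sem_completion_imp_hole:
  assumes "pred_sem dI \<Delta> p vs h" and "p = P'" and "vs = a # b # ws"
  shows "pred_sem dI \<Delta> P (a # b # Loc c1 # Dat c2 # ws) h"
  using assms
proof (induction arbitrary: a b ws rule: pred_sem.induct)
  case (1 p ps rs' Z Pi Sig s vs h)
  have ps: "ps = [LV e, DV c] @ xi" and "(Z, Pi, Sig) \<in> compl_rule P P' f hh c1 c2 ` set rs"
    using "1.hyps"(1,2) "1.prems"(1) P'_params P'_rules by auto
  then obtain Pi0 Sig0 where rule: "(Z, Pi0, Sig0) \<in> set rs"
    and Pi: "Pi = map (subst_patom f hh c1 c2) Pi0"
    and Sig: "Sig = map (subst_satom f hh c1 c2) (map (ren_satom P P' f hh) Sig0)"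
    by (auto simp: compl_rule_Pair)
  define s' where "s' = stack_upd f hh c1 c2 s"
  have "map (evalv s') ([LV e, DV c, LV f, DV hh] @ xi) = a # b # Loc c1 # Dat c2 # ws"
    unfolding s'_def map_evalv_params_stack_upd using "1.hyps"(3) "1.prems"(2) ps by simp
  moreover have "\<forall>a\<in>set Pi0. sat_pure dI s' a"
    using "1.hyps"(4) by (simp add: Pi s'_def sat_pure_subst_patom)
  moreover have "sat_sep (pred_sem dI \<Delta>) s' h Sig0"
    using "1.IH" unfolding Sig sat_sep_subst_satom s'_def[symmetric]
    by (rule sat_sep_ren_satomD[rotated 2]) (auto simp: s'_def)
  ultimately show ?case
    by (rule pred_sem_P_intro[OF rule])
qed

lemma pred_sem_hole_imp_completion:
  assumes "pred_sem dI \<Delta> p vs h" and "p = P" and "vs = a # b # Loc c1 # Dat c2 # ws"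
  shows "pred_sem dI \<Delta> P' (a # b # ws) h"
  using assms
proof (induction arbitrary: a b ws rule: pred_sem.induct)
  case (1 p ps rs' Z Pi Sig s vs h)
  have rule: "(Z, Pi, Sig) \<in> set rs"
    and vs: "map (evalv s) ([LV e, DV c, LV f, DV hh] @ xi) = a # b # Loc c1 # Dat c2 # ws"
    using 1 P_def by auto
  then have hole: "fst s f = c1" "snd s hh = c2"
    by auto
  then have s_fixed: "stack_upd f hh c1 c2 s = s"
    by (rule stack_upd_triv)
  show ?case
  proof (rule pred_sem_P'_intro[OF rule compl_rule_Pair])
    show "map (evalv s) ([LV e, DV c] @ xi) = a # b # ws"
      using vs by simp
    show "\<forall>a\<in>set (map (subst_patom f hh c1 c2) Pi). sat_pure dI s a"
      using "1.hyps"(4) s_fixed by (simp add: sat_pure_subst_patom)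
    show "sat_sep (pred_sem dI \<Delta>) s h
        (map (subst_satom f hh c1 c2) (map (ren_satom P P' f hh) Sig))"
      unfolding sat_sep_subst_satom s_fixed
      using "1.IH" by (rule sat_sep_ren_satomI[rotated 2]) (auto simp: hole)
  qed
qed

theorem equiv_completion_hole:
  "equiv_sl dI \<Delta> (FAtom (SPred P' (map V ([LV e, DV c] @ xi))))
     (FAtom (SPred P ([V (LV e), V (DV c), LC c1, DC c2] @ map V xi)))"
  unfolding equiv_sl_def entails_def
  by (auto simp: comp_def
      intro: pred_sem_completion_imp_hole[OF _ refl refl] pred_sem_hole_imp_completion[OF _ refl refl])

end

locale compositional_completion = completion +
  assumes inductive_rules: "\<forall>r \<in> set rs. r \<noteq> base_rule e c f hh \<longrightarrow> comp_ind_rule P e c f hh xi r"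
begin

lemma pred_sem_compose:
  assumes "pred_sem dI \<Delta> p vs h1" and "p = P" and "vs = a # b # a' # b' # ws"
    and "hdisj h1 h2" and "pred_sem dI \<Delta> P' (a' # b' # ws) h2"
  shows "pred_sem dI \<Delta> P' (a # b # ws) (hunion h1 h2)"
  using assms
proof (induction arbitrary: a b a' b' ws h2 rule: pred_sem.induct)
  case (1 p ps rs' Z Pi Sig s vs h)
  have rule: "(Z, Pi, Sig) \<in> set rs"
    and vs: "map (evalv s) ([LV e, DV c, LV f, DV hh] @ xi) = a # b # a' # b' # ws"
    using 1 P_def by auto
  show ?case
  proof (cases "(Z, Pi, Sig) = base_rule e c f hh")
    case True
    then have "h = hemp" and "a' = a" and "b' = b"
      using "1.hyps"(4) "1.IH" vs by (auto simp: base_rule_def)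
    then show ?thesis
      using "1.prems"(4) by simp
  next
    case False
    have "LV f \<notin> set xi" "DV hh \<notin> set xi"
      using params_distinct by auto
    with False rule inductive_rules obtain Sig0 g1 g2 where
      Sig: "mset Sig = mset (Sig0 @ [SPred P ([V g1, V g2, V (LV f), V (DV hh)] @ map V xi)])"
      and compl_Sig: "mset (map (subst_satom f hh c1 c2) (map (ren_satom P P' f hh) Sig))
        = mset (Sig0 @ [SPred P' ([V g1, V g2] @ map V xi)])"
      and compl_Pi: "map (subst_patom f hh c1 c2) Pi = Pi"
      by (metis comp_ind_rule_completion)
    have vals: "a = Loc (fst s e)" "b = Dat (snd s c)" "a' = Loc (fst s f)" "b' = Dat (snd s hh)"
      "ws = map (evalv s) xi"
      using vs by auto
    from sat_sep_perm[OF Sig "1.IH"] obtain hA hR where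
      split: "hdisj hA hR" "h = hunion hA hR"
      and Sig0_holds: "sat_sep (pred_sem dI \<Delta>) s hA Sig0"
      and rec_IH: "\<And>h2. hdisj hR h2 \<Longrightarrow> pred_sem dI \<Delta> P' (a' # b' # ws) h2
        \<Longrightarrow> pred_sem dI \<Delta> P' (evalv s g1 # evalv s g2 # ws) (hunion hR h2)"
      unfolding sat_sep_append sat_sep_single sep_conj_def vals
      by (simp add: comp_def del: split_paired_All split_paired_Ex) (blast intro: sat_sep_weaken)
    have disj: "hdisj hA (hunion hR h2)" "hdisj hR h2"
      using "1.prems"(3) split by (auto simp: hdisj_hunion_left hdisj_hunion_right)
    have "sat_sep (pred_sem dI \<Delta>) s (hunion hR h2) [SPred P' ([V g1, V g2] @ map V xi)]"
      unfolding sat_sep_single using rec_IH[OF disj(2) "1.prems"(4)] vals by (simp add: comp_def)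
    then have "sat_sep (pred_sem dI \<Delta>) s (hunion hA (hunion hR h2))
        (Sig0 @ [SPred P' ([V g1, V g2] @ map V xi)])"
      unfolding sat_sep_append sep_conj_def using Sig0_holds disj(1) by blast
    then have "sat_sep (pred_sem dI \<Delta>) s (hunion h h2)
        (map (subst_satom f hh c1 c2) (map (ren_satom P P' f hh) Sig))"
      using sat_sep_perm[OF compl_Sig[symmetric]] split(2) by (simp add: hunion_assoc)
    moreover have "map (evalv s) ([LV e, DV c] @ xi) = a # b # ws"
      using vals by simp
    moreover have "\<forall>a \<in> set (map (subst_patom f hh c1 c2) Pi). sat_pure dI s a"
      using "1.hyps"(4) compl_Pi by simp
    ultimately show ?thesis
      by (intro pred_sem_P'_intro[OF rule compl_rule_Pair])
  qed
qed

theorem entails_compose_completion: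
  "entails dI \<Delta>
     (FEx (LV f) (FEx (DV hh)
        (FSep (FAtom (SPred P (map V ([LV e, DV c, LV f, DV hh] @ xi))))
              (FAtom (SPred P' (map V ([LV f, DV hh] @ xi)))))))
     (FAtom (SPred P' (map V ([LV e, DV c] @ xi))))"
  unfolding entails_def
proof (intro allI impI)
  fix s h
  assume "sat dI \<Delta> s h (FEx (LV f) (FEx (DV hh)
      (FSep (FAtom (SPred P (map V ([LV e, DV c, LV f, DV hh] @ xi))))
            (FAtom (SPred P' (map V ([LV f, DV hh] @ xi)))))))"
  then obtain l d h1 h2 where "hdisj h1 h2" "h = hunion h1 h2"
    "pred_sem dI \<Delta> P (map (evalv (stack_upd f hh l d s)) ([LV e, DV c, LV f, DV hh] @ xi)) h1"
    "pred_sem dI \<Delta> P' (map (evalv (stack_upd f hh l d s)) ([LV f, DV hh] @ xi)) h2"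
    unfolding sat_FEx_LV_FEx_DV by (auto simp: comp_def simp del: map_append split_paired_Ex)
  moreover have "LV f \<notin> set xi" "DV hh \<notin> set xi"
    using params_distinct by auto
  ultimately show "sat dI \<Delta> s h (FAtom (SPred P' (map V ([LV e, DV c] @ xi))))"
    unfolding map_evalv_params_stack_upd
    by (simp add: comp_def map_evalv_stack_upd pred_sem_compose)
qed

end

lemma compositional_completionI:
  assumes "fst (\<Delta> P) = [LV e, DV c, LV f, DV hh] @ xi"
    and "synt_compositional \<Delta> P" and "is_completion \<Delta> P P' c1 c2"
  shows "compositional_completion \<Delta> P P' e c f hh xi (snd (\<Delta> P)) c1 c2"
  using assms
  unfolding synt_compositional_def is_completion_def compositional_completion_def
    completion_def compositional_completion_axioms_def
  by auto

theorem theorem2: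
  fixes \<Delta> :: "('n, 'l, 'd, 'c, 'pf, 'df, 'p) sid"
    and dI :: "'c \<Rightarrow> 'd list \<Rightarrow> bool"
    and P P' :: 'p and e c f hh :: 'n and xi :: "'n var list" and c1 :: 'l and c2 :: 'd
  assumes params: "fst (\<Delta> P) = [LV e, DV c, LV f, DV hh] @ xi"
    and comp: "synt_compositional \<Delta> P"
    and compl: "is_completion \<Delta> P P' c1 c2"
  shows "(equiv_sl dI \<Delta>
           (FAtom (SPred P' (map V ([LV e, DV c] @ xi))))
           (FAtom (SPred P ([V (LV e), V (DV c), LC c1, DC c2] @ map V xi))))
       \<and> entails dI \<Delta>
           (FEx (LV f) (FEx (DV hh)
              (FSep (FAtom (SPred P (map V ([LV e, DV c, LV f, DV hh] @ xi))))
                    (FAtom (SPred P' (map V ([LV f, DV hh] @ xi)))))))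
           (FAtom (SPred P' (map V ([LV e, DV c] @ xi))))"
proof -
  interpret compositional_completion \<Delta> P P' e c f hh xi "snd (\<Delta> P)" c1 c2
    using params comp compl by (rule compositional_completionI)
  show ?thesis
    using equiv_completion_hole entails_compose_completion by blast
qed

end
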